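(* If $G$ is a connected, claw-free cubic graph, then $\sigma_{(3,1)}(G) \le \beta(G) + 1$. Moreover, this bound is sharp: there exist connected, claw-free cubic graphs $G$ with $\sigma_{(3,1)}(G) = \beta(G)+1$.
   Context: A graph is claw-free if it has no induced subgraph isomorphic to $K_{1,3}$; it is cubic if every vertex has degree $3$. $\beta(G)$ denotes the vertex covering number (minimum size of a set of vertices meeting every edge). $(p,q)$-spreading: let $p\in\mathbb{N}$ and $q\in\mathbb{N}\cup\{\infty\}$. Start with a set $S\subseteq V(G)$ of blue vertices, all other vertices white. The color change rule: if a white vertex $w$ has at least $p$ blue neighbors, and at least one of the blue neighbors of $w$ has at most $q$ white neighbors, then $w$ is recolored blue. $S$ is a $(p,q)$-spreading set if repeatedly applying this rule eventually colors all vertices blue. $\sigma_{(p,q)}(G)$ is the minimum cardinality of a $(p,q)$-spreading set of $G$. *)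

theory Defs
  imports Main "HOL-Library.Extended_Nat"
begin

definition graph :: "'a set \<Rightarrow> ('a \<Rightarrow> 'a \<Rightarrow> bool) \<Rightarrow> bool" where
  "graph V E \<longleftrightarrow> finite V \<and> (\<forall>u v. E u v \<longrightarrow> u \<in> V \<and> v \<in> V)
     \<and> (\<forall>u v. E u v \<longrightarrow> E v u) \<and> (\<forall>v. \<not> E v v)"

definition nbhd :: "'a set \<Rightarrow> ('a \<Rightarrow> 'a \<Rightarrow> bool) \<Rightarrow> 'a \<Rightarrow> 'a set" where
  "nbhd V E v = {u \<in> V. E v u}"

definition cubic :: "'a set \<Rightarrow> ('a \<Rightarrow> 'a \<Rightarrow> bool) \<Rightarrow> bool" where
  "cubic V E \<longleftrightarrow> (\<forall>v\<in>V. card (nbhd V E v) = 3)"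

definition claw_free :: "'a set \<Rightarrow> ('a \<Rightarrow> 'a \<Rightarrow> bool) \<Rightarrow> bool" where
  "claw_free V E \<longleftrightarrow> \<not> (\<exists>v\<in>V. \<exists>a b c. a \<in> nbhd V E v \<and> b \<in> nbhd V E v \<and> c \<in> nbhd V E v
       \<and> a \<noteq> b \<and> a \<noteq> c \<and> b \<noteq> c \<and> \<not> E a b \<and> \<not> E a c \<and> \<not> E b c)"

definition connected_graph :: "'a set \<Rightarrow> ('a \<Rightarrow> 'a \<Rightarrow> bool) \<Rightarrow> bool" where
  "connected_graph V E \<longleftrightarrow> (\<forall>u\<in>V. \<forall>v\<in>V. E\<^sup>*\<^sup>* u v)"

definition vertex_cover :: "'a set \<Rightarrow> ('a \<Rightarrow> 'a \<Rightarrow> bool) \<Rightarrow> 'a set \<Rightarrow> bool" where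
  "vertex_cover V E C \<longleftrightarrow> C \<subseteq> V \<and> (\<forall>u v. E u v \<longrightarrow> u \<in> C \<or> v \<in> C)"

definition vc_number :: "'a set \<Rightarrow> ('a \<Rightarrow> 'a \<Rightarrow> bool) \<Rightarrow> nat" where
  "vc_number V E = Min {card C | C. vertex_cover V E C}"

text \<open>One round of the (p,q) colour change rule applied to all eligible white vertices
  (the rule is monotone, so the final blue set does not depend on the order of application).\<close>
definition spread_step :: "'a set \<Rightarrow> ('a \<Rightarrow> 'a \<Rightarrow> bool) \<Rightarrow> nat \<Rightarrow> enat \<Rightarrow> 'a set \<Rightarrow> 'a set" where
  "spread_step V E p q B = B \<union> {w \<in> V - B. p \<le> card (nbhd V E w \<inter> B)
       \<and> (\<exists>u \<in> nbhd V E w \<inter> B. enat (card (nbhd V E u - B)) \<le> q)}"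

definition spreading_set :: "'a set \<Rightarrow> ('a \<Rightarrow> 'a \<Rightarrow> bool) \<Rightarrow> nat \<Rightarrow> enat \<Rightarrow> 'a set \<Rightarrow> bool" where
  "spreading_set V E p q S \<longleftrightarrow> S \<subseteq> V \<and> (\<exists>k. (spread_step V E p q ^^ k) S = V)"

definition sigma :: "'a set \<Rightarrow> ('a \<Rightarrow> 'a \<Rightarrow> bool) \<Rightarrow> nat \<Rightarrow> enat \<Rightarrow> nat" where
  "sigma V E p q = Min {card S | S. spreading_set V E p q S}"

end

theory Submission
  imports Defs
begin

(*
  Let C be a minimum vertex cover and x a vertex outside it, start the (3,1)-process
  from C + x and let B be the blue set once the process stalls. Every white vertex w lies outside C,
  so its three neighbours are blue, and w stays white only because each of them has two white
  neighbours. Call v saturated if v and all its neighbours are blue; x is saturated. If v is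
  saturated and its neighbour y had a white neighbour, then y would have two white neighbours,
  non-adjacent (both lie outside C) and not adjacent to v: a claw at y. So saturation spreads
  along edges and, the graph being connected, B = V.

  In a cubic graph an edge with both ends white never turns blue under the
  (3,q)-rule, so spreading sets are vertex covers. In a claw-free cubic graph a vertex of a cover
  C has at most two neighbours outside C, and counting the edges between C and V - C gives
  3 |V - C| <= 2 |C|. In the case of equality every blue vertex has two white neighbours and
  nothing spreads at all. Hence, if 5 beta = 3 |V|, every (3,1)-spreading set has more than
  beta vertices.
*)

lemma graph_finite: "graph V E \<Longrightarrow> finite V"
  by (simp add: graph_def)

lemma graph_sym: "graph V E \<Longrightarrow> E u v \<Longrightarrow> E v u"
  by (simp add: graph_def)

lemma graph_edge_in_vertices: "graph V E \<Longrightarrow> E u v \<Longrightarrow> u \<in> V \<and> v \<in> V"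
  by (simp add: graph_def)

lemma graph_irrefl: "graph V E \<Longrightarrow> \<not> E v v"
  by (simp add: graph_def)

lemma in_nbhd_iff: "graph V E \<Longrightarrow> u \<in> nbhd V E v \<longleftrightarrow> E v u"
  by (auto simp: nbhd_def graph_def)

lemma finite_nbhd: "graph V E \<Longrightarrow> finite (nbhd V E v)"
  unfolding nbhd_def by (simp add: graph_finite)

lemma vertex_cover_nbhd_subset:
  "vertex_cover V E C \<Longrightarrow> u \<notin> C \<Longrightarrow> nbhd V E u \<subseteq> C"
  by (auto simp: vertex_cover_def nbhd_def)

lemma vertex_cover_independent_complement:
  "vertex_cover V E C \<Longrightarrow> a \<notin> C \<Longrightarrow> b \<notin> C \<Longrightarrow> \<not> E a b"
  by (auto simp: vertex_cover_def)

lemma claw_free_card_independent_nbrs: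
  assumes "claw_free V E" "v \<in> V" "W \<subseteq> nbhd V E v" "\<And>a b. a \<in> W \<Longrightarrow> b \<in> W \<Longrightarrow> \<not> E a b"
  shows "card W \<le> 2"
proof (rule ccontr)
  assume "\<not> card W \<le> 2"
  then obtain T where "T \<subseteq> W" "card T = 3"
    by (metis not_less_eq_eq numeral_2_eq_2 numeral_3_eq_3 obtain_subset_with_card_n)
  then obtain a b c where "a \<in> W" "b \<in> W" "c \<in> W" "a \<noteq> b" "a \<noteq> c" "b \<noteq> c"
    by (auto simp: card_3_iff)
  with assms show False
    unfolding claw_free_def by blast
qed

lemma connected_graph_propagate:
  assumes "connected_graph V E" "x \<in> V" "P x" "\<And>v w. P v \<Longrightarrow> E v w \<Longrightarrow> P w" "v \<in> V"
  shows "P v"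
proof -
  have "E\<^sup>*\<^sup>* x v"
    using assms(1,2,5) by (simp add: connected_graph_def)
  then show ?thesis
    by (induction rule: rtranclp_induct) (use assms(3,4) in blast)+
qed

lemma finite_cards_of_subsets:
  "finite V \<Longrightarrow> (\<And>X. P X \<Longrightarrow> X \<subseteq> V) \<Longrightarrow> finite {card X | X. P X}"
  by (rule finite_subset[of _ "card ` Pow V"]) auto

lemma Min_card_le:
  assumes "finite V" "\<And>X. P X \<Longrightarrow> X \<subseteq> V" "P X"
  shows "Min {card X | X. P X} \<le> card X"
  using finite_cards_of_subsets[OF assms(1,2)] assms(3) by (blast intro: Min_le)

lemma Min_card_attained:
  assumes "finite V" "\<And>X. P X \<Longrightarrow> X \<subseteq> V" "P Y"
  obtains X where "P X" "Min {card X | X. P X} = card X"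
proof -
  have "Min {card X | X. P X} \<in> {card X | X. P X}"
    using finite_cards_of_subsets[OF assms(1,2)] assms(3) by (intro Min_in) auto
  with that show thesis
    by blast
qed

lemma inflationary_iteration_stabilises:
  assumes "finite V" "S \<subseteq> V" "\<And>B. B \<subseteq> V \<Longrightarrow> B \<subseteq> f B \<and> f B \<subseteq> V"
  shows "\<exists>k. f ((f ^^ k) S) = (f ^^ k) S \<and> S \<subseteq> (f ^^ k) S \<and> (f ^^ k) S \<subseteq> V"
  using assms(2)
proof (induction "card (V - S)" arbitrary: S rule: less_induct)
  case less
  show ?case
  proof (cases "f S = S")
    case True
    with less.prems show ?thesis
      by (metis funpow_0 order_refl)
  next
    case False
    with less.prems assms(3) have "S \<subset> f S" "f S \<subseteq> V"
      by auto
    then have "card (V - f S) < card (V - S)"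
      using assms(1) by (intro psubset_card_mono) auto
    then obtain k where "f ((f ^^ k) (f S)) = (f ^^ k) (f S)" "f S \<subseteq> (f ^^ k) (f S)"
      "(f ^^ k) (f S) \<subseteq> V"
      using less.hyps \<open>f S \<subseteq> V\<close> by blast
    moreover have "(f ^^ k) (f S) = (f ^^ Suc k) S"
      by (simp only: funpow_Suc_right comp_apply)
    ultimately show ?thesis
      using \<open>S \<subset> f S\<close> by (intro exI[of _ "Suc k"]) auto
  qed
qed

lemma spreading_setI:
  assumes "finite V" "S \<subseteq> V"
    and "\<And>B. S \<subseteq> B \<Longrightarrow> B \<subseteq> V \<Longrightarrow> spread_step V E p q B = B \<Longrightarrow> B = V"
  shows "spreading_set V E p q S"
proof -
  let ?f = "spread_step V E p q"
  have "B \<subseteq> ?f B \<and> ?f B \<subseteq> V" if "B \<subseteq> V" for B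
    using that by (auto simp: spread_step_def)
  from inflationary_iteration_stabilises[OF assms(1,2) this]
  obtain k where "?f ((?f ^^ k) S) = (?f ^^ k) S" "S \<subseteq> (?f ^^ k) S" "(?f ^^ k) S \<subseteq> V"
    by blast
  with assms(2,3) show ?thesis
    unfolding spreading_set_def by blast
qed

lemma spreading_set_stable:
  assumes "spreading_set V E p q S" "spread_step V E p q S = S"
  shows "S = V"
proof -
  have "(spread_step V E p q ^^ k) S = S" for k
    using assms(2) by (induction k) auto
  then show ?thesis
    using assms(1) by (auto simp: spreading_set_def)
qed

lemma spread_step_eq_self:
  assumes "\<forall>u\<in>B. q < enat (card (nbhd V E u - B))"
  shows "spread_step V E p q B = B"
  using assms by (auto simp: spread_step_def dest: leD)

lemma stable_blue_nbr_white_nbrs: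
  assumes "spread_step V E p q B = B" "w \<in> V - B" "p \<le> card (nbhd V E w \<inter> B)"
    "u \<in> nbhd V E w \<inter> B"
  shows "q < enat (card (nbhd V E u - B))"
proof (rule ccontr)
  assume "\<not> q < enat (card (nbhd V E u - B))"
  with assms(2-4) have "w \<in> spread_step V E p q B"
    by (auto simp: spread_step_def not_less)
  with assms(1,2) show False
    by simp
qed

lemma sigma_le_card: "finite V \<Longrightarrow> spreading_set V E p q S \<Longrightarrow> sigma V E p q \<le> card S"
  unfolding sigma_def by (rule Min_card_le) (auto simp: spreading_set_def)

lemma sigma_attained:
  assumes "finite V"
  obtains S where "spreading_set V E p q S" "sigma V E p q = card S"
proof -
  have "\<And>X. spreading_set V E p q X \<Longrightarrow> X \<subseteq> V"
    by (simp add: spreading_set_def)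
  moreover have "spreading_set V E p q V"
    unfolding spreading_set_def by (metis funpow_0 order_refl)
  ultimately obtain S where "spreading_set V E p q S" "Min {card S | S. spreading_set V E p q S} = card S"
    by (rule Min_card_attained[OF assms])
  with that show thesis
    by (simp add: sigma_def)
qed

lemma vc_number_le_card: "graph V E \<Longrightarrow> vertex_cover V E C \<Longrightarrow> vc_number V E \<le> card C"
  unfolding vc_number_def by (rule Min_card_le[of V]) (auto simp: vertex_cover_def graph_finite)

lemma vc_number_attained:
  assumes "graph V E"
  obtains C where "vertex_cover V E C" "vc_number V E = card C"
proof -
  have "\<And>X. vertex_cover V E X \<Longrightarrow> X \<subseteq> V"
    by (simp add: vertex_cover_def)
  moreover have "vertex_cover V E V"
    using assms by (auto simp: vertex_cover_def graph_def)
  ultimately obtain C where "vertex_cover V E C" "Min {card C | C. vertex_cover V E C} = card C"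
    by (rule Min_card_attained[OF graph_finite[OF assms]])
  with that show thesis
    by (simp add: vc_number_def)
qed

lemma stable_saturation_propagates:
  assumes g: "graph V E" and cf: "claw_free V E" and cub: "cubic V E"
    and C: "vertex_cover V E C" "C \<subseteq> B" and stable: "spread_step V E 3 1 B = B"
    and v: "v \<in> B" "nbhd V E v \<subseteq> B" and "E v y"
  shows "nbhd V E y \<subseteq> B"
proof (rule ccontr)
  assume "\<not> nbhd V E y \<subseteq> B"
  have "y \<in> B"
    using v(2) \<open>E v y\<close> in_nbhd_iff[OF g] by blast
  from \<open>\<not> nbhd V E y \<subseteq> B\<close> obtain w where w: "w \<in> nbhd V E y" "w \<notin> B"
    by blast
  then have "w \<in> V" "nbhd V E w \<subseteq> B"
    using C vertex_cover_nbhd_subset[OF C(1)] by (auto simp: nbhd_def)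
  then have "card (nbhd V E w \<inter> B) = 3"
    using cub by (simp add: Int_absorb2 cubic_def)
  moreover have "y \<in> nbhd V E w \<inter> B"
    using w \<open>y \<in> B\<close> in_nbhd_iff[OF g] graph_sym[OF g] by blast
  ultimately have "1 < enat (card (nbhd V E y - B))"
    using stable_blue_nbr_white_nbrs[OF stable] \<open>w \<in> V\<close> w(2) by simp
  then have "2 \<le> card (nbhd V E y - B)"
    by (simp add: one_enat_def)
  \<comment> \<open>Two white neighbours of y together with v form a claw at y.\<close>
  let ?W = "insert v (nbhd V E y - B)"
  have white_white: "\<not> E a b" if "a \<notin> B" "b \<notin> B" for a b
    using vertex_cover_independent_complement[OF C(1)] that C(2) by blast
  have v_white: "\<not> E v a" "\<not> E a v" if "a \<notin> B" for a
    using v(2) that in_nbhd_iff[OF g] graph_sym[OF g] by blast+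
  have "\<not> E a b" if "a \<in> ?W" "b \<in> ?W" for a b
    using that by (auto simp: white_white v_white graph_irrefl[OF g])
  moreover have "?W \<subseteq> nbhd V E y"
    using \<open>E v y\<close> in_nbhd_iff[OF g] graph_sym[OF g] by blast
  moreover have "y \<in> V"
    using graph_edge_in_vertices[OF g \<open>E v y\<close>] by blast
  ultimately have "card ?W \<le> 2"
    by (intro claw_free_card_independent_nbrs[OF cf])
  moreover have "card ?W = Suc (card (nbhd V E y - B))"
    using v(1) finite_nbhd[OF g] by simp
  ultimately show False
    using \<open>2 \<le> card (nbhd V E y - B)\<close> by linarith
qed

lemma stable_superset_of_cover_plus_vertex:
  assumes g: "graph V E" and conn: "connected_graph V E" and cf: "claw_free V E" and cub: "cubic V E"
    and C: "vertex_cover V E C" and x: "x \<in> V - C"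
    and B: "insert x C \<subseteq> B" "B \<subseteq> V" and stable: "spread_step V E 3 1 B = B"
  shows "B = V"
proof -
  let ?saturated = "\<lambda>v. v \<in> B \<and> nbhd V E v \<subseteq> B"
  have "C \<subseteq> B"
    using B by blast
  have "?saturated x"
    using vertex_cover_nbhd_subset[OF C] x B by blast
  moreover have "?saturated y" if "?saturated v" "E v y" for v y
  proof
    show "y \<in> B"
      using that in_nbhd_iff[OF g] by blast
    show "nbhd V E y \<subseteq> B"
      using stable_saturation_propagates[OF g cf cub C \<open>C \<subseteq> B\<close> stable] that by blast
  qed
  ultimately have "?saturated v" if "v \<in> V" for v
    using connected_graph_propagate[OF conn, of x ?saturated] x that by blast
  with B show ?thesis
    by blast
qed

lemma sigma_31_le_vc_number_Suc:
  assumes g: "graph V E" and "connected_graph V E" "claw_free V E" "cubic V E"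
  shows "sigma V E 3 1 \<le> vc_number V E + 1"
proof -
  obtain C where C: "vertex_cover V E C" "vc_number V E = card C"
    using vc_number_attained[OF g] by blast
  have "C \<subseteq> V" "finite V"
    using C(1) g by (auto simp: vertex_cover_def graph_finite)
  show ?thesis
  proof (cases "C = V")
    case True
    then have "spreading_set V E 3 1 C"
      using \<open>finite V\<close> by (intro spreading_setI) auto
    then show ?thesis
      using sigma_le_card[OF \<open>finite V\<close>] C(2) by fastforce
  next
    case False
    with \<open>C \<subseteq> V\<close> obtain x where "x \<in> V - C"
      by blast
    then have "spreading_set V E 3 1 (insert x C)"
      using \<open>C \<subseteq> V\<close> stable_superset_of_cover_plus_vertex[OF assms C(1)]
      by (intro spreading_setI[OF \<open>finite V\<close>]) auto
    then have "sigma V E 3 1 \<le> card (insert x C)"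
      using sigma_le_card[OF \<open>finite V\<close>] by blast
    also have "\<dots> \<le> card C + 1"
      by (simp add: card_insert_le_m1)
    finally show ?thesis
      using C(2) by simp
  qed
qed

lemma spread_step_keeps_white_edge:
  assumes g: "graph V E" and cub: "cubic V E" and "E u v" "u \<notin> B" "v \<notin> B"
  shows "u \<notin> spread_step V E 3 q B"
proof
  assume "u \<in> spread_step V E 3 q B"
  then have "3 \<le> card (nbhd V E u \<inter> B)"
    using \<open>u \<notin> B\<close> by (simp add: spread_step_def)
  moreover have "nbhd V E u \<inter> B \<subset> nbhd V E u"
    using assms(3,5) in_nbhd_iff[OF g] by blast
  then have "card (nbhd V E u \<inter> B) < card (nbhd V E u)"
    using finite_nbhd[OF g] by (rule psubset_card_mono[rotated])
  moreover have "card (nbhd V E u) = 3"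
    using cub graph_edge_in_vertices[OF g \<open>E u v\<close>] by (simp add: cubic_def)
  ultimately show False
    by linarith
qed

lemma spreading_set_vertex_cover:
  assumes g: "graph V E" and cub: "cubic V E" and S: "spreading_set V E 3 q S"
  shows "vertex_cover V E S"
proof -
  obtain k where k: "(spread_step V E 3 q ^^ k) S = V"
    using S by (auto simp: spreading_set_def)
  have "u \<in> S \<or> v \<in> S" if "E u v" for u v
  proof (rule ccontr)
    assume "\<not> (u \<in> S \<or> v \<in> S)"
    then have "u \<notin> (spread_step V E 3 q ^^ j) S \<and> v \<notin> (spread_step V E 3 q ^^ j) S" for j
    proof (induction j)
      case (Suc j)
      then show ?case
        using spread_step_keeps_white_edge[OF g cub that]
          spread_step_keeps_white_edge[OF g cub graph_sym[OF g that]] by simp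
    qed simp
    with k show False
      using graph_edge_in_vertices[OF g that] by blast
  qed
  with S show ?thesis
    by (auto simp: vertex_cover_def spreading_set_def)
qed

lemma card_nbhd_outside_vertex_cover_le:
  assumes "claw_free V E" "vertex_cover V E C" "c \<in> V"
  shows "card (nbhd V E c - C) \<le> 2"
  using vertex_cover_independent_complement[OF assms(2)]
  by (intro claw_free_card_independent_nbrs[OF assms(1,3)]) auto

lemma sum_card_nbhd_outside_vertex_cover:
  assumes g: "graph V E" and cub: "cubic V E" and C: "vertex_cover V E C"
  shows "(\<Sum>c\<in>C. card (nbhd V E c - C)) = 3 * card (V - C)"
proof -
  have fin: "finite C" "finite (V - C)"
    using C graph_finite[OF g] by (auto simp: vertex_cover_def intro: finite_subset)
  have "(\<Sum>c\<in>C. card (nbhd V E c - C)) = (\<Sum>c\<in>C. \<Sum>w\<in>V - C. of_bool (E c w))"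
  proof (intro sum.cong refl)
    fix c
    have "nbhd V E c - C = (V - C) \<inter> {w. E c w}"
      by (auto simp: nbhd_def)
    then show "card (nbhd V E c - C) = (\<Sum>w\<in>V - C. of_bool (E c w))"
      using fin by simp
  qed
  also have "\<dots> = (\<Sum>w\<in>V - C. \<Sum>c\<in>C. of_bool (E c w))"
    by (rule sum.swap)
  also have "\<dots> = (\<Sum>w\<in>V - C. card (nbhd V E w))"
  proof (intro sum.cong refl)
    fix w assume "w \<in> V - C"
    then have "nbhd V E w = C \<inter> {c. E c w}"
      using vertex_cover_nbhd_subset[OF C] in_nbhd_iff[OF g] graph_sym[OF g] by blast
    then show "(\<Sum>c\<in>C. of_bool (E c w)) = card (nbhd V E w)"
      using fin by simp
  qed
  also have "\<dots> = 3 * card (V - C)"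
    using cub by (simp add: cubic_def)
  finally show ?thesis .
qed

lemma card_compl_vertex_cover_le:
  assumes g: "graph V E" and cf: "claw_free V E" and cub: "cubic V E" and C: "vertex_cover V E C"
  shows "3 * card (V - C) \<le> 2 * card C"
proof -
  have "3 * card (V - C) = (\<Sum>c\<in>C. card (nbhd V E c - C))"
    by (rule sum_card_nbhd_outside_vertex_cover[OF g cub C, symmetric])
  also have "\<dots> \<le> (\<Sum>c\<in>C. 2)"
    using C by (intro sum_mono card_nbhd_outside_vertex_cover_le[OF cf C]) (auto simp: vertex_cover_def)
  finally show ?thesis
    by simp
qed

lemma card_nbhd_outside_tight_vertex_cover:
  assumes g: "graph V E" and cf: "claw_free V E" and cub: "cubic V E" and C: "vertex_cover V E C"
    and tight: "3 * card (V - C) = 2 * card C" and "c \<in> C"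
  shows "card (nbhd V E c - C) = 2"
proof (rule ccontr)
  have le: "\<forall>c\<in>C. card (nbhd V E c - C) \<le> 2"
    using C card_nbhd_outside_vertex_cover_le[OF cf C] by (auto simp: vertex_cover_def)
  assume "card (nbhd V E c - C) \<noteq> 2"
  with le \<open>c \<in> C\<close> have "\<exists>c\<in>C. card (nbhd V E c - C) < 2"
    by force
  moreover have "finite C"
    using C g by (auto simp: vertex_cover_def graph_finite intro: finite_subset)
  ultimately have "(\<Sum>c\<in>C. card (nbhd V E c - C)) < (\<Sum>c\<in>C. 2)"
    using le by (intro sum_strict_mono_ex1)
  with tight show False
    using sum_card_nbhd_outside_vertex_cover[OF g cub C] by simp
qed

lemma spreading_set_31_not_tight:
  assumes g: "graph V E" and cf: "claw_free V E" and cub: "cubic V E" and "V \<noteq> {}"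
    and S: "spreading_set V E 3 1 S"
  shows "3 * card (V - S) \<noteq> 2 * card S"
proof
  assume tight: "3 * card (V - S) = 2 * card S"
  have C: "vertex_cover V E S"
    by (rule spreading_set_vertex_cover[OF g cub S])
  have "spread_step V E 3 1 S = S"
    using card_nbhd_outside_tight_vertex_cover[OF g cf cub C tight]
    by (intro spread_step_eq_self) (simp add: one_enat_def)
  then have "S = V"
    by (rule spreading_set_stable[OF S])
  with tight \<open>V \<noteq> {}\<close> graph_finite[OF g] show False
    by simp
qed

lemma sigma_31_eq_vc_number_Suc_if_extremal:
  assumes g: "graph V E" and conn: "connected_graph V E" and cf: "claw_free V E" and cub: "cubic V E"
    and "V \<noteq> {}" and extremal: "5 * vc_number V E \<le> 3 * card V"
  shows "sigma V E 3 1 = vc_number V E + 1"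
proof -
  obtain S where S: "spreading_set V E 3 1 S" "sigma V E 3 1 = card S"
    using sigma_attained[OF graph_finite[OF g]] by blast
  have C: "vertex_cover V E S"
    by (rule spreading_set_vertex_cover[OF g cub S(1)])
  have card_V: "card V = card S + card (V - S)"
    using C graph_finite[OF g] by (metis card_Diff_subset card_mono finite_subset le_add_diff_inverse vertex_cover_def)
  have "card S \<noteq> vc_number V E"
  proof
    assume "card S = vc_number V E"
    with extremal card_V card_compl_vertex_cover_le[OF g cf cub C]
    have "3 * card (V - S) = 2 * card S"
      by linarith
    with spreading_set_31_not_tight[OF g cf cub \<open>V \<noteq> {}\<close> S(1)] show False
      by blast
  qed
  with vc_number_le_card[OF g C] sigma_31_le_vc_number_Suc[OF g conn cf cub] S(2) show ?thesis
    by linarith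
qed

lemma cubic_claw_freeI:
  assumes g: "graph V E" and cub: "cubic V E"
    and edge_in_nbhd: "\<And>v. v \<in> V \<Longrightarrow> \<exists>a\<in>nbhd V E v. \<exists>b\<in>nbhd V E v. E a b"
  shows "claw_free V E"
  unfolding claw_free_def
proof clarify
  fix v a b c
  assume v: "v \<in> V" and abc: "a \<in> nbhd V E v" "b \<in> nbhd V E v" "c \<in> nbhd V E v"
    "a \<noteq> b" "a \<noteq> c" "b \<noteq> c" and indep: "\<not> E a b" "\<not> E a c" "\<not> E b c"
  have "{a, b, c} = nbhd V E v"
    using abc cub v finite_nbhd[OF g] by (intro card_seteq) (auto simp: cubic_def)
  moreover obtain x y where "x \<in> nbhd V E v" "y \<in> nbhd V E v" "E x y"
    using edge_in_nbhd[OF v] by blast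
  ultimately have "x \<in> {a, b, c}" "y \<in> {a, b, c}" "E x y"
    by simp_all
  with indep show False
    using graph_irrefl[OF g] graph_sym[OF g] by auto
qed

lemma rtranclp_graph_sym:
  assumes "graph V E" "E\<^sup>*\<^sup>* u v"
  shows "E\<^sup>*\<^sup>* v u"
  using assms(2)
  by (induction rule: rtranclp_induct) (auto intro: converse_rtranclp_into_rtranclp dest: graph_sym[OF assms(1)])

lemma connected_graphI:
  assumes "graph V E" "\<And>v. v \<in> V \<Longrightarrow> E\<^sup>*\<^sup>* x v"
  shows "connected_graph V E"
  unfolding connected_graph_def
  using assms rtranclp_graph_sym[OF assms(1)] by (meson rtranclp_trans)

(*
  A diamond on 0, 1, 4, 5 (without the edge 0-1) and the triangles 2, 6, 7 and 3, 8, 9, joined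
  by the edges 0-6, 1-8, 2-9 and 3-7; the cover 4, ..., 9 gives 5 beta = 3 |V|. Positions beyond 9
  of the neighbour list are unspecified, hence the guard u < 10 in example_adj.
*)
definition example_nbrs :: "nat \<Rightarrow> nat set" where
  "example_nbrs v = [{4,5,6}, {4,5,8}, {6,7,9}, {7,8,9}, {0,1,5},
                     {0,1,4}, {0,2,7}, {2,3,6}, {1,3,9}, {2,3,8}] ! v"

definition example_adj :: "nat \<Rightarrow> nat \<Rightarrow> bool" where
  "example_adj u v \<longleftrightarrow> u < 10 \<and> v \<in> example_nbrs u"

lemma all_less_10_iff:
  "(\<forall>v::nat<10. P v) \<longleftrightarrow> P 0 \<and> P 1 \<and> P 2 \<and> P 3 \<and> P 4 \<and> P 5 \<and> P 6 \<and> P 7 \<and> P 8 \<and> P 9"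
  by (simp add: numeral_eq_Suc All_less_Suc2)

lemma example_nbrs_sym: "\<forall>u<10. \<forall>v\<in>example_nbrs u. v < 10 \<and> u \<in> example_nbrs v \<and> u \<noteq> v"
  unfolding all_less_10_iff by (simp add: example_nbrs_def)

lemma example_graph: "graph {..<10} example_adj"
  using example_nbrs_sym unfolding graph_def example_adj_def by auto

lemma example_nbhd:
  assumes "v < 10"
  shows "nbhd {..<10} example_adj v = example_nbrs v"
proof -
  have "example_nbrs v \<subseteq> {..<10}"
    using example_nbrs_sym assms by auto
  with assms show ?thesis
    by (auto simp: nbhd_def example_adj_def)
qed

lemma example_cubic: "cubic {..<10} example_adj"
proof -
  have "\<forall>v<10. card (example_nbrs v) = 3"
    unfolding all_less_10_iff by (simp add: example_nbrs_def)
  then show ?thesis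
    by (simp add: cubic_def example_nbhd)
qed

lemma example_claw_free: "claw_free {..<10} example_adj"
proof (rule cubic_claw_freeI[OF example_graph example_cubic])
  have "\<forall>v<10. \<exists>a\<in>example_nbrs v. \<exists>b\<in>example_nbrs v. example_adj a b"
    unfolding all_less_10_iff by (simp add: example_nbrs_def example_adj_def)
  then show "\<exists>a\<in>nbhd {..<10} example_adj v. \<exists>b\<in>nbhd {..<10} example_adj v. example_adj a b"
    if "v \<in> {..<10}" for v
    using that example_nbhd by simp
qed

lemma example_connected: "connected_graph {..<10} example_adj"
proof (rule connected_graphI[OF example_graph])
  have step: "example_adj\<^sup>*\<^sup>* 0 v" if "example_adj\<^sup>*\<^sup>* 0 u" "u < 10" "v \<in> example_nbrs u" for u v
    using that by (auto simp: example_adj_def intro: rtranclp.rtrancl_into_rtrancl)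
  have r0: "example_adj\<^sup>*\<^sup>* 0 0"
    by simp
  have r1: "example_adj\<^sup>*\<^sup>* 0 4" "example_adj\<^sup>*\<^sup>* 0 5" "example_adj\<^sup>*\<^sup>* 0 6"
    using step[OF r0] by (simp_all add: example_nbrs_def)
  have r2: "example_adj\<^sup>*\<^sup>* 0 1" "example_adj\<^sup>*\<^sup>* 0 2" "example_adj\<^sup>*\<^sup>* 0 7"
    using step[OF r1(1)] step[OF r1(3)] by (simp_all add: example_nbrs_def)
  have r3: "example_adj\<^sup>*\<^sup>* 0 3"
    using step[OF r2(3)] by (simp add: example_nbrs_def)
  have r4: "example_adj\<^sup>*\<^sup>* 0 8" "example_adj\<^sup>*\<^sup>* 0 9"
    using step[OF r3] by (simp_all add: example_nbrs_def)
  from r0 r1 r2 r3 r4 have "\<forall>v<10. example_adj\<^sup>*\<^sup>* 0 v"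
    unfolding all_less_10_iff by blast
  then show "example_adj\<^sup>*\<^sup>* 0 v" if "v \<in> {..<10}" for v
    using that by blast
qed

lemma example_vc_number_le: "5 * vc_number {..<10} example_adj \<le> 3 * card {..<10::nat}"
proof -
  have "\<forall>u<10. \<forall>v\<in>example_nbrs u. u \<in> {4..9} \<or> v \<in> {4..9}"
    unfolding all_less_10_iff by (simp add: example_nbrs_def)
  then have "vertex_cover {..<10} example_adj {4..9}"
    by (auto simp: vertex_cover_def example_adj_def)
  then show ?thesis
    using vc_number_le_card[OF example_graph] by fastforce
qed

theorem proposition3p12:
  shows "(\<forall>(V :: 'a set) E. graph V E \<and> connected_graph V E \<and> claw_free V E \<and> cubic V E
            \<longrightarrow> sigma V E 3 1 \<le> vc_number V E + 1)
       \<and> (\<exists>(V :: nat set) E. graph V E \<and> connected_graph V E \<and> claw_free V E \<and> cubic V E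
            \<and> sigma V E 3 1 = vc_number V E + 1)"
proof
  show "\<forall>(V :: 'a set) E. graph V E \<and> connected_graph V E \<and> claw_free V E \<and> cubic V E
          \<longrightarrow> sigma V E 3 1 \<le> vc_number V E + 1"
    using sigma_31_le_vc_number_Suc by blast
  have "sigma {..<10} example_adj 3 1 = vc_number {..<10} example_adj + 1"
    by (rule sigma_31_eq_vc_number_Suc_if_extremal[OF example_graph example_connected
          example_claw_free example_cubic _ example_vc_number_le]) (simp add: lessThan_empty_iff)
  then show "\<exists>(V :: nat set) E. graph V E \<and> connected_graph V E \<and> claw_free V E \<and> cubic V E
          \<and> sigma V E 3 1 = vc_number V E + 1"
    using example_graph example_connected example_claw_free example_cubic by blast
qed

end
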